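(* Let $k\geq2$ and for $\lambda>0$ consider the uniform mixture of $\mathcal D_1,\dots,\mathcal D_k$ where $\mathcal D_i=\mathcal N(\lambda e_i, I_k)$ on $\mathbb R^k$ ($e_i$ the $i$-th standard basis vector). Let $Z$ be a sample from the mixture and $J$ the index of the component it was drawn from. Then one can choose $\lambda=\Theta(\sqrt{\log k})$ such that every estimator $\Psi$ (not necessarily efficiently computable) satisfies $\mathbb P(\Psi(Z)\neq J)\geq c$ for some absolute constant $c>0$. *)

theory Defs
  imports "HOL-Probability.Probability"
begin

text \<open>Mixture component i (indices 0..k-1): the Gaussian N(lam e_i, I_k) on R^k,
  realised as the product of k independent one-dimensional normal laws
  with mean lam for coordinate i and 0 otherwise, variance 1.\<close>
definition gauss_comp :: "nat \<Rightarrow> real \<Rightarrow> nat \<Rightarrow> (nat \<Rightarrow> real) measure" where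
  "gauss_comp k lam i =
     PiM {..<k} (\<lambda>j. density lborel (normal_density (if j = i then lam else 0) 1))"

text \<open>P(Psi(Z) \<noteq> J) for (J, Z) with J uniform on {0..k-1} and Z ~ D_J.\<close>
definition mixture_error :: "nat \<Rightarrow> real \<Rightarrow> ((nat \<Rightarrow> real) \<Rightarrow> nat) \<Rightarrow> real" where
  "mixture_error k lam Psi =
     (\<Sum>i<k. (1 / real k) * measure (gauss_comp k lam i)
                              {z \<in> space (gauss_comp k lam i). Psi z \<noteq> i})"

end

theory Submission
  imports Defs
begin

text \<open>Let \<open>Q\<close> be the product of \<open>k\<close> standard Gaussians. The \<open>i\<close>-th component has density
  \<open>L\<^sub>i(z) = exp (\<lambda> z\<^sub>i - \<lambda>\<^sup>2/2)\<close> with respect to \<open>Q\<close>, and \<open>\<integral> L\<^sub>i\<^sup>2 dQ = exp \<lambda>\<^sup>2\<close>.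
  An estimator splits the sample space into disjoint acceptance regions \<open>B\<^sub>i\<close>; the
  pointwise bound \<open>L \<le> T + L\<^sup>2/(4T)\<close> gives \<open>P\<^sub>i(B\<^sub>i) \<le> T Q(B\<^sub>i) + exp \<lambda>\<^sup>2/(4T)\<close>, and summing
  over \<open>i\<close> and optimising \<open>T\<close> bounds the average success probability by
  \<open>sqrt (exp \<lambda>\<^sup>2 / k)\<close>. For \<open>\<lambda>\<^sup>2 = (ln k)/2\<close> this is \<open>k powr (-1/4) \<le> 2 powr (-1/4)\<close>.\<close>

definition gaussian :: "real \<Rightarrow> real measure" where
  "gaussian \<mu> = density lborel (normal_density \<mu> 1)"

definition gaussian_lr :: "real \<Rightarrow> real \<Rightarrow> real" where
  "gaussian_lr lam x = exp (lam * x - lam\<^sup>2 / 2)"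

lemma prob_space_gaussian: "prob_space (gaussian \<mu>)"
  unfolding gaussian_def by (rule prob_space_normal_density) simp

lemma sets_gaussian [simp, measurable_cong]: "sets (gaussian \<mu>) = sets borel"
  by (simp add: gaussian_def)

lemma gaussian_lr_measurable [measurable]: "gaussian_lr lam \<in> borel_measurable borel"
  unfolding gaussian_lr_def by measurable

lemma normal_density_mult_gaussian_lr:
  "normal_density 0 1 x * gaussian_lr lam x = normal_density lam 1 x"
  unfolding normal_density_def gaussian_lr_def
  by (simp add: exp_add[symmetric] power2_eq_square algebra_simps)

lemma normal_density_mult_gaussian_lr_sq:
  "normal_density 0 1 x * (gaussian_lr lam x)\<^sup>2 = exp (lam\<^sup>2) * normal_density (2 * lam) 1 x"
  unfolding normal_density_def gaussian_lr_def
  by (simp add: exp_add[symmetric] power2_eq_square algebra_simps flip: exp_of_nat_mult)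
     (simp add: field_simps)

lemma density_gaussian_gaussian_lr:
  "density (gaussian 0) (\<lambda>x. ennreal (gaussian_lr lam x)) = gaussian lam"
  unfolding gaussian_def
  by (subst density_density_eq)
     (simp_all flip: ennreal_mult' add: normal_density_mult_gaussian_lr)

lemma nn_integral_gaussian_lr_sq:
  "(\<integral>\<^sup>+x. ennreal ((gaussian_lr lam x)\<^sup>2) \<partial>gaussian 0) = ennreal (exp (lam\<^sup>2))"
proof -
  have "(\<integral>\<^sup>+x. ennreal ((gaussian_lr lam x)\<^sup>2) \<partial>gaussian 0)
      = (\<integral>\<^sup>+x. ennreal (exp (lam\<^sup>2)) * ennreal (normal_density (2 * lam) 1 x) \<partial>lborel)"
    unfolding gaussian_def
    by (subst nn_integral_density)
       (simp_all flip: ennreal_mult' add: normal_density_mult_gaussian_lr_sq)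
  also have "\<dots> = ennreal (exp (lam\<^sup>2)) * emeasure (gaussian (2 * lam)) (space (gaussian (2 * lam)))"
    unfolding gaussian_def by (subst nn_integral_cmult) (simp_all add: emeasure_density)
  also have "\<dots> = ennreal (exp (lam\<^sup>2))"
    using prob_space.emeasure_space_1[OF prob_space_gaussian] by simp
  finally show ?thesis .
qed

lemma indicator_PiE_eq_prod:
  assumes "finite I" "z \<in> extensional I"
  shows "indicator (Pi\<^sub>E I A) z = (\<Prod>j\<in>I. indicator (A j) (z j) :: 'a :: comm_semiring_1)"
proof (cases "z \<in> Pi\<^sub>E I A")
  case False
  with assms obtain j where "j \<in> I" "z j \<notin> A j" by (auto simp: PiE_def Pi_def)
  with assms(1) have "(\<Prod>j\<in>I. indicator (A j) (z j) :: 'a) = 0"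
    by (intro prod_zero bexI) auto
  with False show ?thesis by simp
next
  case True
  then have "\<forall>j\<in>I. z j \<in> A j" by auto
  with True show ?thesis by (simp add: prod.neutral)
qed

lemma PiM_density:
  assumes "finite I"
    and "product_sigma_finite M" "product_sigma_finite (\<lambda>j. density (M j) (f j))"
    and f [measurable]: "\<And>j. f j \<in> borel_measurable (M j)"
  shows "PiM I (\<lambda>j. density (M j) (f j)) = density (PiM I M) (\<lambda>z. \<Prod>j\<in>I. f j (z j))"
proof -
  interpret M: product_sigma_finite M by fact
  interpret D: product_sigma_finite "\<lambda>j. density (M j) (f j)" by fact
  show ?thesis
  proof (rule D.PiM_eqI[symmetric, OF \<open>finite I\<close>])
    show "sets (density (PiM I M) (\<lambda>z. \<Prod>j\<in>I. f j (z j)))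
        = sets (PiM I (\<lambda>j. density (M j) (f j)))"
      unfolding sets_density by (rule sets_PiM_cong) simp_all
  next
    fix A assume "\<And>j. j \<in> I \<Longrightarrow> A j \<in> sets (density (M j) (f j))"
    then have A [measurable]: "\<And>j. j \<in> I \<Longrightarrow> A j \<in> sets (M j)" by simp
    have [measurable]: "Pi\<^sub>E I A \<in> sets (PiM I M)"
      using \<open>finite I\<close> A by (rule sets_PiM_I_finite)
    have "emeasure (density (PiM I M) (\<lambda>z. \<Prod>j\<in>I. f j (z j))) (Pi\<^sub>E I A)
        = (\<integral>\<^sup>+z. (\<Prod>j\<in>I. f j (z j)) * indicator (Pi\<^sub>E I A) z \<partial>PiM I M)"
      by (rule emeasure_density) measurable
    also have "\<dots> = (\<integral>\<^sup>+z. (\<Prod>j\<in>I. f j (z j) * indicator (A j) (z j)) \<partial>PiM I M)"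
    proof (rule nn_integral_cong)
      fix z assume "z \<in> space (PiM I M)"
      then have "z \<in> extensional I" by (simp add: space_PiM PiE_def)
      with \<open>finite I\<close> show "(\<Prod>j\<in>I. f j (z j)) * indicator (Pi\<^sub>E I A) z
          = (\<Prod>j\<in>I. f j (z j) * indicator (A j) (z j))"
        by (simp add: prod.distrib indicator_PiE_eq_prod)
    qed
    also have "\<dots> = (\<Prod>j\<in>I. \<integral>\<^sup>+x. f j x * indicator (A j) x \<partial>M j)"
      by (rule M.product_nn_integral_prod) (use \<open>finite I\<close> in measurable)
    also have "\<dots> = (\<Prod>j\<in>I. emeasure (density (M j) (f j)) (A j))"
      by (intro prod.cong refl emeasure_density[symmetric]) measurable
    finally show "emeasure (density (PiM I M) (\<lambda>z. \<Prod>j\<in>I. f j (z j))) (Pi\<^sub>E I A)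
        = (\<Prod>j\<in>I. emeasure (density (M j) (f j)) (A j))" .
  qed
qed

lemma gauss_comp_eq_density:
  assumes "i < k"
  shows "gauss_comp k lam i
    = density (PiM {..<k} (\<lambda>_. gaussian 0)) (\<lambda>z. ennreal (gaussian_lr lam (z i)))"
proof -
  define f where "f j x = (if j = i then ennreal (gaussian_lr lam x) else 1)" for j x
  have component: "density (gaussian 0) (f j) = gaussian (if j = i then lam else 0)" for j
    by (cases "j = i") (simp_all add: f_def[abs_def] density_gaussian_gaussian_lr density_1)
  have [measurable]: "f j \<in> borel_measurable (gaussian 0)" for j
    unfolding f_def[abs_def] by measurable
  have "gauss_comp k lam i = PiM {..<k} (\<lambda>j. density (gaussian 0) (f j))"
    unfolding gauss_comp_def component by (simp add: gaussian_def)
  also have "\<dots> = density (PiM {..<k} (\<lambda>_. gaussian 0)) (\<lambda>z. \<Prod>j<k. f j (z j))"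
    by (rule PiM_density)
       (simp_all add: component product_sigma_finite_def prob_space_imp_sigma_finite
         prob_space_gaussian f_def)
  also have "(\<lambda>z. \<Prod>j<k. f j (z j)) = (\<lambda>z. ennreal (gaussian_lr lam (z i)))"
    using assms by (simp add: f_def prod.delta)
  finally show ?thesis .
qed

lemma nn_integral_PiM_gaussian_lr_sq:
  assumes "i < k"
  shows "(\<integral>\<^sup>+z. ennreal ((gaussian_lr lam (z i))\<^sup>2) \<partial>PiM {..<k} (\<lambda>_. gaussian 0))
    = ennreal (exp (lam\<^sup>2))"
proof -
  have "distr (PiM {..<k} (\<lambda>_. gaussian 0)) (gaussian 0) (\<lambda>z. z i) = gaussian 0"
    using assms by (intro distr_PiM_component) (simp_all add: prob_space_gaussian)
  then show ?thesis
    using assms nn_integral_distr[of "\<lambda>z. z i" "PiM {..<k} (\<lambda>_. gaussian 0)" "gaussian 0"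
        "\<lambda>x. ennreal ((gaussian_lr lam x)\<^sup>2)"]
    by (simp add: nn_integral_gaussian_lr_sq)
qed

lemma measure_density_le_second_moment:
  assumes "finite_measure M" and [measurable]: "f \<in> borel_measurable M" "A \<in> sets M"
    and second_moment: "(\<integral>\<^sup>+x. ennreal ((f x)\<^sup>2) \<partial>M) = ennreal S" and "0 \<le> S" "0 < T"
  shows "measure (density M (\<lambda>x. ennreal (f x))) A \<le> T * measure M A + S / (4 * T)"
proof -
  interpret finite_measure M by fact
  have am_gm: "ennreal (f x) * indicator A x
      \<le> ennreal T * indicator A x + ennreal (1 / (4 * T)) * ennreal ((f x)\<^sup>2)" for x
  proof -
    have "4 * T * f x \<le> 4 * T * T + (f x)\<^sup>2"
      using zero_le_power2[of "f x - 2 * T"] by (simp add: power2_eq_square algebra_simps)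
    then have "f x \<le> T + 1 / (4 * T) * (f x)\<^sup>2"
      using \<open>0 < T\<close> by (simp add: field_simps)
    then show ?thesis
      using \<open>0 < T\<close>
      by (auto simp: indicator_def simp flip: ennreal_mult ennreal_plus intro!: ennreal_leI)
  qed
  have "emeasure (density M (\<lambda>x. ennreal (f x))) A
      = (\<integral>\<^sup>+x. ennreal (f x) * indicator A x \<partial>M)"
    by (rule emeasure_density) measurable
  also have "\<dots>
      \<le> (\<integral>\<^sup>+x. ennreal T * indicator A x + ennreal (1 / (4 * T)) * ennreal ((f x)\<^sup>2) \<partial>M)"
    by (intro nn_integral_mono am_gm)
  also have "\<dots> = ennreal T * emeasure M A + ennreal (1 / (4 * T)) * ennreal S"
    by (simp add: nn_integral_add nn_integral_cmult second_moment)
  also have "\<dots> = ennreal (T * measure M A + S / (4 * T))"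
    using \<open>0 \<le> S\<close> \<open>0 < T\<close>
    by (simp add: emeasure_eq_measure flip: ennreal_mult ennreal_plus)
  finally have "measure (density M (\<lambda>x. ennreal (f x))) A
      \<le> enn2real (ennreal (T * measure M A + S / (4 * T)))"
    unfolding measure_def by (rule enn2real_mono) simp
  then show ?thesis
    using \<open>0 \<le> S\<close> \<open>0 < T\<close> by (simp del: ennreal_plus)
qed

lemma sum_measure_density_disjoint_le:
  fixes S :: real
  assumes "prob_space Q" "finite I"
    and [measurable]: "\<And>i. i \<in> I \<Longrightarrow> L i \<in> borel_measurable Q"
    and second_moment: "\<And>i. i \<in> I \<Longrightarrow> (\<integral>\<^sup>+x. ennreal ((L i x)\<^sup>2) \<partial>Q) = ennreal S"
    and "0 < S" and B: "disjoint_family_on B I" "\<And>i. i \<in> I \<Longrightarrow> B i \<in> sets Q"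
  shows "(\<Sum>i\<in>I. measure (density Q (\<lambda>x. ennreal (L i x))) (B i)) \<le> sqrt (card I * S)"
proof -
  interpret prob_space Q by fact
  define T where "T = sqrt (card I * S) / 2"
  show ?thesis
  proof (cases "I = {}")
    case False
    then have "0 < card I" using \<open>finite I\<close> by (simp add: card_gt_0_iff)
    then have "0 < T" using \<open>0 < S\<close> by (simp add: T_def)
    have "(\<Sum>i\<in>I. measure (density Q (\<lambda>x. ennreal (L i x))) (B i))
        \<le> (\<Sum>i\<in>I. T * measure Q (B i) + S / (4 * T))"
      using \<open>0 < S\<close> \<open>0 < T\<close>
      by (intro sum_mono measure_density_le_second_moment second_moment B) auto
    also have "\<dots> = T * measure Q (\<Union>i\<in>I. B i) + card I * S / (4 * T)"
      using \<open>finite I\<close> B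
      by (simp add: sum.distrib sum_distrib_left finite_measure_finite_Union image_subset_iff)
    also have "\<dots> \<le> T + card I * S / (4 * T)"
      using \<open>0 < T\<close> by (simp add: mult_left_le)
    also have "\<dots> = sqrt (card I * S)"
      using \<open>0 < card I\<close> \<open>0 < S\<close> by (simp add: T_def field_simps real_sqrt_mult)
    finally show ?thesis .
  qed simp
qed

lemma mixture_error_ge:
  assumes "0 < k"
    and Psi: "Psi \<in> measurable (PiM {..<k} (\<lambda>_. borel :: real measure)) (count_space UNIV)"
  shows "1 - sqrt (exp (lam\<^sup>2) / k) \<le> mixture_error k lam Psi"
proof -
  define Q where "Q = PiM {..<k} (\<lambda>_. gaussian 0)"
  define B where "B i = {z \<in> space Q. Psi z = i}" for i
  have sets_Q: "sets Q = sets (PiM {..<k} (\<lambda>_. borel :: real measure))"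
    unfolding Q_def by (rule sets_PiM_cong) simp_all
  have sets_comp: "sets (gauss_comp k lam i) = sets Q" for i
    unfolding gauss_comp_def Q_def gaussian_def by (rule sets_PiM_cong) simp_all
  have [measurable]: "Psi \<in> measurable Q (count_space UNIV)"
    using Psi by (simp add: measurable_cong_sets[OF sets_Q refl])
  have B_sets: "B i \<in> sets Q" for i
    unfolding B_def by measurable
  have error: "measure (gauss_comp k lam i) {z \<in> space (gauss_comp k lam i). Psi z \<noteq> i}
      = 1 - measure (gauss_comp k lam i) (B i)" for i
  proof -
    interpret prob_space "gauss_comp k lam i"
      unfolding gauss_comp_def by (intro prob_space_PiM prob_space_normal_density) simp
    have "{z \<in> space (gauss_comp k lam i). Psi z \<noteq> i} = space (gauss_comp k lam i) - B i"
      using sets_eq_imp_space_eq[OF sets_comp] by (auto simp: B_def)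
    then show ?thesis
      using B_sets sets_comp by (simp add: prob_compl)
  qed
  have "(\<Sum>i<k. measure (gauss_comp k lam i) (B i))
      = (\<Sum>i<k. measure (density Q (\<lambda>z. ennreal (gaussian_lr lam (z i)))) (B i))"
    by (intro sum.cong refl) (simp add: gauss_comp_eq_density Q_def)
  also have "\<dots> \<le> sqrt (card {..<k} * exp (lam\<^sup>2))"
    by (intro sum_measure_density_disjoint_le[where L = "\<lambda>i z. gaussian_lr lam (z i)"])
       (auto simp: Q_def prob_space_PiM prob_space_gaussian nn_integral_PiM_gaussian_lr_sq
         B_sets[unfolded Q_def] B_sets[unfolded Q_def B_def] disjoint_family_on_def B_def)
  also have "\<dots> = sqrt ((real k)\<^sup>2 * (exp (lam\<^sup>2) / k))"
    using \<open>0 < k\<close> by (simp add: power2_eq_square)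
  also have "\<dots> = k * sqrt (exp (lam\<^sup>2) / k)"
    by (subst real_sqrt_mult) simp
  finally have "(\<Sum>i<k. measure (gauss_comp k lam i) (B i)) / k \<le> sqrt (exp (lam\<^sup>2) / k)"
    using \<open>0 < k\<close> by (simp add: field_simps)
  moreover have "mixture_error k lam Psi = 1 - (\<Sum>i<k. measure (gauss_comp k lam i) (B i)) / k"
    using \<open>0 < k\<close>
    by (simp add: mixture_error_def error diff_divide_distrib sum_subtractf sum_divide_distrib)
  ultimately show ?thesis by linarith
qed

lemma mixture_error_ge_at_sqrt_ln:
  assumes "2 \<le> k"
    and "Psi \<in> measurable (PiM {..<k} (\<lambda>_. borel :: real measure)) (count_space UNIV)"
  shows "1 - exp (- ln 2 / 4) \<le> mixture_error k (sqrt (1 / 2) * sqrt (ln k)) Psi"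
proof -
  define lam where "lam = sqrt (1 / 2) * sqrt (ln k)"
  have "ln 2 \<le> ln k" and "0 < ln k"
    using \<open>2 \<le> k\<close> by simp_all
  have "sqrt (exp (lam\<^sup>2) / k) = exp (- ln k / 4)"
  proof (rule real_sqrt_unique)
    have "(exp (- ln k / 4))\<^sup>2 = exp (ln k / 2) / exp (ln k)"
      by (simp add: power2_eq_square flip: exp_add exp_diff)
    also have "\<dots> = exp (lam\<^sup>2) / k"
      using \<open>0 < ln k\<close> \<open>2 \<le> k\<close> by (simp add: lam_def power_mult_distrib)
    finally show "(exp (- ln k / 4))\<^sup>2 = exp (lam\<^sup>2) / k" .
  qed simp
  also have "\<dots> \<le> exp (- ln 2 / 4)"
    using \<open>ln 2 \<le> ln k\<close> by simp
  finally show ?thesis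
    using mixture_error_ge[OF _ assms(2), of lam] \<open>2 \<le> k\<close> by (simp add: lam_def)
qed

theorem lemma7p3:
  shows "\<exists>c>0. \<exists>a>0. \<exists>b>0. \<forall>k::nat. k \<ge> 2 \<longrightarrow>
           (\<exists>lam>0. a * sqrt (ln (real k)) \<le> lam \<and> lam \<le> b * sqrt (ln (real k)) \<and>
              (\<forall>Psi \<in> measurable (PiM {..<k} (\<lambda>_. (borel :: real measure))) (count_space UNIV).
                  mixture_error k lam Psi \<ge> c))"
proof -
  have "0 < 1 - exp (- ln 2 / 4 :: real)" and "0 < sqrt (1 / 2 :: real)"
    by simp_all
  moreover have "0 < sqrt (1 / 2) * sqrt (ln k)" if "2 \<le> k" for k :: nat
    using that by simp
  ultimately show ?thesis
    using mixture_error_ge_at_sqrt_ln by blast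
qed

end
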